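(* Assume no treatment anticipation, missingness as an absorbing state, random sampling, and Principal Parallel Trends: $$\mathbb{E}[Y_{i2}(0)-Y_{i1}\mid G_i=1,V_i=AO]=\mathbb{E}[Y_{i2}(0)-Y_{i1}\mid G_i=0,V_i=AO].$$ Assume moreover that, conditional on $S_{i2}=1$ and $G_i=g$ ($g\in\{0,1\}$), $\ddot Y_i$ is continuously distributed with finite mean, and that $\pi_1,\pi_0\in(0,1]$ are known. Define $$\Delta^{LB}=\mathbb{E}[\ddot Y_i\mid G_i=1,S_{i2}=1,\ddot Y_i\le \ddot y^1_{\pi_1}]-\mathbb{E}[\ddot Y_i\mid G_i=0,S_{i2}=1,\ddot Y_i\ge \ddot y^0_{1-\pi_0}],$$ $$\Delta^{UB}=\mathbb{E}[\ddot Y_i\mid G_i=1,S_{i2}=1,\ddot Y_i\ge \ddot y^1_{1-\pi_1}]-\mathbb{E}[\ddot Y_i\mid G_i=0,S_{i2}=1,\ddot Y_i\le \ddot y^0_{\pi_0}].$$ Then $$\Delta^{LB}\le \mathrm{ATT}_{AO}\le\Delta^{UB}.$$ Moreover, these bounds are sharp: they are the tightest bounds on $\mathrm{ATT}_{AO}$ that are compatible with the assumptions and the distribution of the observed data.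
   Context: Setting (two groups, two periods). Units $i$ are observed in periods $t\in\{1,2\}$. $G_i\in\{0,1\}$ indicates that unit $i$ is treated in period 2; nobody is treated in period 1. Under SUTVA, each unit has potential outcomes $Y_{i2}(1),Y_{i2}(0)$ and potential selection indicators $S_{i2}(1),S_{i2}(0)\in\{0,1\}$. Here $S=1$ means the outcome is observed and well-defined. The observed quantities are $Y_{i2}=G_iY_{i2}(1)+(1-G_i)Y_{i2}(0)$ and $S_{i2}=G_iS_{i2}(1)+(1-G_i)S_{i2}(0)$. No treatment anticipation: the period-1 outcome $Y_{i1}$ and selection $S_{i1}$ do not depend on the period-2 treatment, so they are common to both treatment regimes. In particular $Y_{i1}=Y_{i1}(0)$. Missingness is absorbing: $S_{i1}=0\Rightarrow S_{i2}=0$, also for both potential selection indicators. Random sampling: $\{Y_{i1},Y_{i2},S_{i1},S_{i2},G_i\}_{i=1}^N$ are i.i.d. Principal strata: $V_i$ is the stratum defined by $(S_{i2}(0),S_{i2}(1))$. The strata are - $AO$ (Always-Observed): $(1,1)$; - $NO$ (Never-Observed): $(0,0)$; - $OC$ (observed only in control): $(1,0)$; - $OT$ (observed only in treatment): $(0,1)$. The target estimand is $\mathrm{ATT}_{AO}=\mathbb{E}[Y_{i2}(1)-Y_{i2}(0)\mid G_i=1,V_i=AO]$. Further notation: - $\ddot Y_i=Y_{i2}-Y_{i1}$. - $\ddot y^g_q=F^{-1}(q)$, where $F$ is the c.d.f. of $\ddot Y$ conditional on $S_2=1,G=g$. - $\pi_1=\Pr(S_{i2}(0)=1\mid G_i=1,S_{i2}(1)=1)$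 and $\pi_0=\Pr(S_{i2}(1)=1\mid G_i=0,S_{i2}(0)=1)$. These are the proportions of Always-Observed units among the units observed in period 2 in the treatment and control group, respectively. *)

theory Defs
  imports "HOL-Probability.Probability"
begin

text \<open>A unit is a point of the probability space M. Boolean-valued random variables
  encode G, S1, S2(0), S2(1); real-valued ones encode Y1, Y2(0), Y2(1).\<close>

definition cond_mean :: "'a measure \<Rightarrow> ('a \<Rightarrow> real) \<Rightarrow> 'a set \<Rightarrow> real" where
  "cond_mean M X A = (LINT x:A|M. X x) / measure M A"

definition cond_cdf :: "'a measure \<Rightarrow> ('a \<Rightarrow> real) \<Rightarrow> 'a set \<Rightarrow> real \<Rightarrow> real" where
  "cond_cdf M X A y = measure M {x \<in> A. X x \<le> y} / measure M A"

text \<open>Generalised inverse F^{-1}(q) = inf {y. F y \<ge> q}, valued in the extended reals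
  (it is -\<infinity> for q = 0 and may be +\<infinity> for q = 1).\<close>
definition cond_quantile :: "'a measure \<Rightarrow> ('a \<Rightarrow> real) \<Rightarrow> 'a set \<Rightarrow> real \<Rightarrow> ereal" where
  "cond_quantile M X A q = Inf {ereal y | y. q \<le> cond_cdf M X A y}"

definition obsY2 :: "('a \<Rightarrow> bool) \<Rightarrow> ('a \<Rightarrow> real) \<Rightarrow> ('a \<Rightarrow> real) \<Rightarrow> 'a \<Rightarrow> real" where
  "obsY2 G Y20 Y21 x = (if G x then Y21 x else Y20 x)"

definition obsS2 :: "('a \<Rightarrow> bool) \<Rightarrow> ('a \<Rightarrow> bool) \<Rightarrow> ('a \<Rightarrow> bool) \<Rightarrow> 'a \<Rightarrow> bool" where
  "obsS2 G S20 S21 x = (if G x then S21 x else S20 x)"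

definition Ydd :: "('a \<Rightarrow> bool) \<Rightarrow> ('a \<Rightarrow> real) \<Rightarrow> ('a \<Rightarrow> real) \<Rightarrow> ('a \<Rightarrow> real) \<Rightarrow> 'a \<Rightarrow> real" where
  "Ydd G Y1 Y20 Y21 x = obsY2 G Y20 Y21 x - Y1 x"

definition AO_grp :: "'a measure \<Rightarrow> ('a \<Rightarrow> bool) \<Rightarrow> ('a \<Rightarrow> bool) \<Rightarrow> ('a \<Rightarrow> bool) \<Rightarrow> bool \<Rightarrow> 'a set" where
  "AO_grp M G S20 S21 g = {x \<in> space M. G x = g \<and> S20 x \<and> S21 x}"

definition obs_grp :: "'a measure \<Rightarrow> ('a \<Rightarrow> bool) \<Rightarrow> ('a \<Rightarrow> bool) \<Rightarrow> ('a \<Rightarrow> bool) \<Rightarrow> bool \<Rightarrow> 'a set" where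
  "obs_grp M G S20 S21 g = {x \<in> space M. G x = g \<and> obsS2 G S20 S21 x}"

definition pi1 :: "'a measure \<Rightarrow> ('a \<Rightarrow> bool) \<Rightarrow> ('a \<Rightarrow> bool) \<Rightarrow> ('a \<Rightarrow> bool) \<Rightarrow> real" where
  "pi1 M G S20 S21 = measure M (AO_grp M G S20 S21 True) / measure M {x \<in> space M. G x \<and> S21 x}"

definition pi0 :: "'a measure \<Rightarrow> ('a \<Rightarrow> bool) \<Rightarrow> ('a \<Rightarrow> bool) \<Rightarrow> ('a \<Rightarrow> bool) \<Rightarrow> real" where
  "pi0 M G S20 S21 = measure M (AO_grp M G S20 S21 False) / measure M {x \<in> space M. \<not> G x \<and> S20 x}"

definition ATT_AO :: "'a measure \<Rightarrow> ('a \<Rightarrow> bool) \<Rightarrow> ('a \<Rightarrow> real) \<Rightarrow> ('a \<Rightarrow> real) \<Rightarrow> ('a \<Rightarrow> bool) \<Rightarrow> ('a \<Rightarrow> bool) \<Rightarrow> real" where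
  "ATT_AO M G Y20 Y21 S20 S21 = cond_mean M (\<lambda>x. Y21 x - Y20 x) (AO_grp M G S20 S21 True)"

text \<open>No anticipation is built in: Y1 and S1 are single variables common to both
  regimes. Random sampling (i.i.d. units) is built in by modelling the population
  distribution of one generic unit.\<close>
definition did_model :: "'a measure \<Rightarrow> ('a \<Rightarrow> bool) \<Rightarrow> ('a \<Rightarrow> real) \<Rightarrow> ('a \<Rightarrow> bool)
    \<Rightarrow> ('a \<Rightarrow> real) \<Rightarrow> ('a \<Rightarrow> real) \<Rightarrow> ('a \<Rightarrow> bool) \<Rightarrow> ('a \<Rightarrow> bool) \<Rightarrow> bool" where
  "did_model M G Y1 S1 Y20 Y21 S20 S21 \<longleftrightarrow>
     prob_space M \<and>
     G \<in> measurable M (count_space UNIV) \<and> S1 \<in> measurable M (count_space UNIV) \<and>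
     S20 \<in> measurable M (count_space UNIV) \<and> S21 \<in> measurable M (count_space UNIV) \<and>
     Y1 \<in> borel_measurable M \<and> Y20 \<in> borel_measurable M \<and> Y21 \<in> borel_measurable M \<and>
     (\<forall>x\<in>space M. \<not> S1 x \<longrightarrow> \<not> S20 x \<and> \<not> S21 x) \<and>
     set_integrable M (AO_grp M G S20 S21 True) (\<lambda>x. Y20 x - Y1 x) \<and>
     cond_mean M (\<lambda>x. Y20 x - Y1 x) (AO_grp M G S20 S21 True)
       = cond_mean M (\<lambda>x. Y20 x - Y1 x) (AO_grp M G S20 S21 False)"

definition Delta_LB :: "'a measure \<Rightarrow> ('a \<Rightarrow> bool) \<Rightarrow> ('a \<Rightarrow> real) \<Rightarrow> ('a \<Rightarrow> bool) \<Rightarrow> real \<Rightarrow> real \<Rightarrow> real" where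
  "Delta_LB M G D S2 p1 p0 =
     (let A1 = {x \<in> space M. G x \<and> S2 x}; A0 = {x \<in> space M. \<not> G x \<and> S2 x} in
       cond_mean M D {x \<in> A1. ereal (D x) \<le> cond_quantile M D A1 p1}
     - cond_mean M D {x \<in> A0. cond_quantile M D A0 (1 - p0) \<le> ereal (D x)})"

definition Delta_UB :: "'a measure \<Rightarrow> ('a \<Rightarrow> bool) \<Rightarrow> ('a \<Rightarrow> real) \<Rightarrow> ('a \<Rightarrow> bool) \<Rightarrow> real \<Rightarrow> real \<Rightarrow> real" where
  "Delta_UB M G D S2 p1 p0 =
     (let A1 = {x \<in> space M. G x \<and> S2 x}; A0 = {x \<in> space M. \<not> G x \<and> S2 x} in
       cond_mean M D {x \<in> A1. cond_quantile M D A1 (1 - p1) \<le> ereal (D x)}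
     - cond_mean M D {x \<in> A0. ereal (D x) \<le> cond_quantile M D A0 p0})"

end

(* Principal parallel trends turns ATT_AO into E[Ydd | G = 1, AO] - E[Ydd | G = 0, AO], a
   difference of means of the observed first difference over two unobserved sets: in group g
   the always-observed units are a subset of the observed ones of known relative mass pi_g.
   By the bathtub principle the mean over any such subset lies between the means over the
   lower and the upper pi_g-tail of the observed distribution, and since Ydd is continuously
   distributed these tails have exactly the mass pi_g. For sharpness, any two subsets of the
   right masses can be declared to be the always-observed strata, with the untreated outcome of
   the treated ones chosen so that parallel trends holds; declaring the tails attains the bounds. *)

theory Submission
  imports Defs
begin

lemma cond_mean_cong:
  assumes "A \<in> sets M" "\<And>x. x \<in> A \<Longrightarrow> f x = g x"
  shows "cond_mean M f A = cond_mean M g A"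
  unfolding cond_mean_def using assms by (simp add: set_lebesgue_integral_cong)

lemma cond_mean_diff:
  assumes "set_integrable M A f" "set_integrable M A g"
  shows "cond_mean M (\<lambda>x. f x - g x) A = cond_mean M f A - cond_mean M g A"
  unfolding cond_mean_def using assms by (simp add: diff_divide_distrib)

lemma (in finite_measure) cond_mean_const:
  assumes "A \<in> sets M" "0 < measure M A"
  shows "cond_mean M (\<lambda>_. c) A = c"
  unfolding cond_mean_def using assms by (simp add: set_integral_const emeasure_eq_measure)

lemma (in finite_measure) set_integrable_const:
  "A \<in> sets M \<Longrightarrow> set_integrable M A (\<lambda>_. c :: real)"
  unfolding set_integrable_def by (intro integrable_mult_indicator) auto

section \<open>Bathtub principle\<close>

lemma (in finite_measure) set_integral_lower_section_le:
  fixes D :: "'a \<Rightarrow> real" and t :: ereal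
  assumes sets: "A \<in> sets M" "L \<in> sets M" "B \<in> sets M" and "L \<subseteq> A" "B \<subseteq> A"
    and int: "set_integrable M A D" and eq: "measure M B = measure M L"
    and below: "\<And>x. x \<in> L \<Longrightarrow> ereal (D x) \<le> t" and above: "\<And>x. x \<in> A - L \<Longrightarrow> t \<le> ereal (D x)"
  shows "(LINT x:L|M. D x) \<le> (LINT x:B|M. D x)"
proof -
  define r where "r = real_of_ereal t"
  have shift: "(LINT x:S|M. D x) = (LINT x:S|M. D x - r) + r * measure M S"
    if "S \<in> sets M" "S \<subseteq> A" for S
    using set_integral_diff(2)[OF set_integrable_subset[OF int that] set_integrable_const[OF that(1)]]
    by (simp add: set_integral_const[OF that(1)] emeasure_eq_measure)
  \<comment> \<open>Centering at the threshold costs nothing because L and B have equal mass, and it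
    makes the integrand over L pointwise below the one over B.\<close>
  have "AE x in M. indicator L x * (D x - r) \<le> indicator B x * (D x - r)"
  proof (cases t)
    case (real r')
    then show ?thesis using below above \<open>L \<subseteq> A\<close> \<open>B \<subseteq> A\<close>
      by (intro AE_I2) (auto simp: r_def indicator_def)
  next
    case PInf
    then have "L = A" using above \<open>L \<subseteq> A\<close> by force
    then have "A - B \<in> null_sets M"
      using finite_measure_Diff[OF sets(1,3) \<open>B \<subseteq> A\<close>] eq sets
      by (auto simp: null_sets_def emeasure_eq_measure)
    from AE_not_in[OF this] show ?thesis
      by eventually_elim (use \<open>L = A\<close> \<open>B \<subseteq> A\<close> in \<open>auto simp: indicator_def\<close>)
  next
    case MInf
    then have "L = {}" using below by force
    then have "B \<in> null_sets M" using eq sets by (auto simp: null_sets_def emeasure_eq_measure)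
    from AE_not_in[OF this] show ?thesis
      by eventually_elim (use \<open>L = {}\<close> in \<open>auto simp: indicator_def\<close>)
  qed
  then have "(LINT x:L|M. D x - r) \<le> (LINT x:B|M. D x - r)"
    using set_integral_diff(1)[OF set_integrable_subset[OF int sets(2) \<open>L \<subseteq> A\<close>]
        set_integrable_const[OF sets(2)]]
      set_integral_diff(1)[OF set_integrable_subset[OF int sets(3) \<open>B \<subseteq> A\<close>]
        set_integrable_const[OF sets(3)]]
    unfolding set_integrable_def set_lebesgue_integral_def by (intro integral_mono_AE) auto
  then show ?thesis using shift[OF sets(2) \<open>L \<subseteq> A\<close>] shift[OF sets(3) \<open>B \<subseteq> A\<close>] eq by simp
qed

lemma (in finite_measure) set_integral_upper_section_ge:
  fixes D :: "'a \<Rightarrow> real" and t :: ereal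
  assumes sets: "A \<in> sets M" "U \<in> sets M" "B \<in> sets M" and "U \<subseteq> A" "B \<subseteq> A"
    and int: "set_integrable M A D" and eq: "measure M B = measure M U"
    and above: "\<And>x. x \<in> U \<Longrightarrow> t \<le> ereal (D x)" and below: "\<And>x. x \<in> A - U \<Longrightarrow> ereal (D x) \<le> t"
  shows "(LINT x:B|M. D x) \<le> (LINT x:U|M. D x)"
proof -
  have "(LINT x:U|M. - D x) \<le> (LINT x:B|M. - D x)"
  proof (rule set_integral_lower_section_le[OF assms(1-5) _ eq, where t = "- t"])
    show "set_integrable M A (\<lambda>x. - D x)" using int unfolding set_integrable_def by simp
  qed (use above below in \<open>auto simp flip: uminus_ereal.simps\<close>)
  then show ?thesis
    using set_integral_uminus[OF set_integrable_subset[OF int sets(2) \<open>U \<subseteq> A\<close>]]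
      set_integral_uminus[OF set_integrable_subset[OF int sets(3) \<open>B \<subseteq> A\<close>]] by simp
qed

section \<open>Quantiles of a continuous distribution\<close>

lemma Inf_superlevel_continuous_cases:
  fixes F :: "real \<Rightarrow> real"
  assumes cont: "\<And>y. isCont F y" and bot: "(F \<longlongrightarrow> 0) at_bot" and top: "(F \<longlongrightarrow> 1) at_top"
    and p: "0 < p" "p \<le> 1"
  obtains r where "Inf {ereal y | y. p \<le> F y} = ereal r" "F r = p"
  | "Inf {ereal y | y. p \<le> F y} = \<infinity>" "p = 1"
proof -
  define S where "S = {y. p \<le> F y}"
  have ereal_S: "{ereal y | y. p \<le> F y} = ereal ` S" by (auto simp: S_def)
  show thesis
  proof (cases "S = {}")
    case True
    have "\<not> (\<forall>\<^sub>F y in at_top. p < F y)"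
      using True by (auto simp: S_def dest: eventually_happens'[OF trivial_limit_at_top_linorder] less_imp_le)
    then have "p = 1" using order_tendstoD(1)[OF top, of p] p by (cases "p < 1") auto
    then show thesis using that(2) True ereal_S by (simp add: top_ereal_def)
  next
    case False
    obtain b where b: "\<And>y. y \<le> b \<Longrightarrow> F y < p"
      using order_tendstoD(2)[OF bot p(1)] by (auto simp: eventually_at_bot_linorder)
    have bdd: "bdd_below S"
      using b by (intro bdd_belowI[of _ b]) (metis S_def mem_Collect_eq nle_le not_less)
    have closed: "closed S" unfolding S_def
      by (intro closed_Collect_le continuous_on_const) (simp add: continuous_at_imp_continuous_on cont)
    define r where "r = Inf S"
    have "p \<le> F r" using closed_contains_Inf[OF False bdd closed] by (simp add: S_def r_def)
    moreover have "F r \<le> p"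
    proof (rule tendsto_upperbound)
      show "(F \<longlongrightarrow> F r) (at_left r)" using cont[of r] by (simp add: isCont_def filterlim_at_split)
      have "F y < p" if "y < r" for y
        using cInf_lower[OF _ bdd, of y] that by (force simp: S_def r_def)
      then show "\<forall>\<^sub>F y in at_left r. F y \<le> p"
        using eventually_at_left_real[of "r - 1" r] by (auto elim!: eventually_mono intro: less_imp_le)
    qed simp
    moreover have "Inf (ereal ` S) = ereal r" using ereal_Inf'[OF bdd False] by (simp add: r_def)
    ultimately show thesis using that(1) ereal_S by simp
  qed
qed

definition lower_tail :: "'a measure \<Rightarrow> ('a \<Rightarrow> real) \<Rightarrow> 'a set \<Rightarrow> real \<Rightarrow> 'a set" where
  "lower_tail M D A p = {x\<in>A. ereal (D x) \<le> cond_quantile M D A p}"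

definition upper_tail :: "'a measure \<Rightarrow> ('a \<Rightarrow> real) \<Rightarrow> 'a set \<Rightarrow> real \<Rightarrow> 'a set" where
  "upper_tail M D A p = {x\<in>A. cond_quantile M D A (1 - p) \<le> ereal (D x)}"

lemma lower_tail_subset: "lower_tail M D A p \<subseteq> A"
  by (auto simp: lower_tail_def)

lemma upper_tail_subset: "upper_tail M D A p \<subseteq> A"
  by (auto simp: upper_tail_def)

locale continuous_outcome = finite_measure M for M :: "'a measure" +
  fixes A :: "'a set" and D :: "'a \<Rightarrow> real"
  assumes A_sets[measurable]: "A \<in> sets M" and A_pos: "0 < measure M A"
    and D_measurable[measurable]: "D \<in> borel_measurable M"
    and no_atoms: "\<And>y. measure M {x\<in>A. D x = y} = 0"
    and D_integrable: "set_integrable M A D"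
begin

lemma sets_Collect_A: "{x\<in>space M. P x} \<in> sets M \<Longrightarrow> {x\<in>A. P x} \<in> sets M"
proof -
  assume "{x\<in>space M. P x} \<in> sets M"
  moreover have "{x\<in>A. P x} = A \<inter> {x\<in>space M. P x}"
    using sets.sets_into_space[OF A_sets] by auto
  ultimately show ?thesis by simp
qed

lemma cond_cdf_continuous_limits:
  shows "isCont (cond_cdf M D A) y"
    and "(cond_cdf M D A \<longlongrightarrow> 0) at_bot"
    and "(cond_cdf M D A \<longlongrightarrow> 1) at_top"
proof -
  define N where "N = distr (restrict_space M A) borel D"
  have A_space: "A \<subseteq> space M" using sets.sets_into_space[OF A_sets] .
  have measure_N: "measure N B = measure M {x\<in>A. D x \<in> B}" if "B \<in> sets borel" for B
  proof -
    have "measure N B = measure (restrict_space M A) (D -` B \<inter> A)"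
      unfolding N_def using that A_space
      by (subst measure_distr) (auto simp: measurable_restrict_space1 space_restrict_space Int_absorb2)
    also have "\<dots> = measure M {x\<in>A. D x \<in> B}"
      using A_space by (subst measure_restrict_space) (auto intro!: arg_cong[where f="measure M"])
    finally show ?thesis .
  qed
  have "finite_measure N" unfolding N_def
    by (intro finite_measure.finite_measure_distr finite_measure_restrict_space)
      (auto simp: finite_measure_axioms measurable_restrict_space1)
  then interpret N: finite_borel_measure N
    by (intro finite_borel_measure.intro finite_borel_measure_axioms.intro) (simp_all add: N_def)
  have cond_cdf_N: "cond_cdf M D A = (\<lambda>y. cdf N y / measure M A)"
    by (auto simp: cond_cdf_def cdf_def measure_N)
  have "measure N (space N) = measure M A"
    using measure_N[of UNIV] by (simp add: N_def)
  then show "(cond_cdf M D A \<longlongrightarrow> 0) at_bot" "(cond_cdf M D A \<longlongrightarrow> 1) at_top"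
    unfolding cond_cdf_N using N.cdf_lim_at_bot N.cdf_lim_at_top A_pos
    by (auto intro!: tendsto_divide_zero tendsto_eq_intros)
  have "measure N {y} = 0" using measure_N[of "{y}"] no_atoms[of y] by simp
  then show "isCont (cond_cdf M D A) y"
    unfolding cond_cdf_N by (intro continuous_intros) (use A_pos in \<open>simp_all add: N.isCont_cdf\<close>)
qed

lemma measure_below_cond_quantile:
  assumes "0 < p" "p \<le> 1"
  shows "measure M {x\<in>A. ereal (D x) \<le> cond_quantile M D A p} = p * measure M A"
    and "measure M {x\<in>A. ereal (D x) < cond_quantile M D A p} = p * measure M A"
proof -
  have le: "{x\<in>A. D x \<le> r} \<in> sets M" and eq: "{x\<in>A. D x = r} \<in> sets M" for r
    by (rule sets_Collect_A, measurable)+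
  from Inf_superlevel_continuous_cases[OF cond_cdf_continuous_limits assms]
  have "measure M {x\<in>A. ereal (D x) \<le> cond_quantile M D A p} = p * measure M A
      \<and> measure M {x\<in>A. ereal (D x) < cond_quantile M D A p} = p * measure M A"
  proof cases
    case (1 r)
    then have "measure M {x\<in>A. D x \<le> r} = p * measure M A"
      using A_pos by (simp add: cond_cdf_def field_simps)
    moreover have "measure M {x\<in>A. D x < r} = measure M {x\<in>A. D x \<le> r}"
    proof -
      have "{x\<in>A. D x < r} = {x\<in>A. D x \<le> r} - {x\<in>A. D x = r}" by auto
      then show ?thesis by (simp add: finite_measure_Diff[OF le eq] no_atoms subset_eq)
    qed
    ultimately show ?thesis using 1 by (simp add: cond_quantile_def)
  next
    case 2
    then show ?thesis by (simp add: cond_quantile_def)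
  qed
  then show "measure M {x\<in>A. ereal (D x) \<le> cond_quantile M D A p} = p * measure M A"
    and "measure M {x\<in>A. ereal (D x) < cond_quantile M D A p} = p * measure M A" by simp_all
qed

lemma sets_lower_tail[measurable]: "lower_tail M D A p \<in> sets M"
  unfolding lower_tail_def by (rule sets_Collect_A, measurable)

lemma sets_upper_tail[measurable]: "upper_tail M D A p \<in> sets M"
  unfolding upper_tail_def by (rule sets_Collect_A, measurable)

lemma measure_lower_tail: "0 < p \<Longrightarrow> p \<le> 1 \<Longrightarrow> measure M (lower_tail M D A p) = p * measure M A"
  unfolding lower_tail_def by (rule measure_below_cond_quantile(1))

lemma measure_upper_tail:
  assumes "0 < p" "p \<le> 1"
  shows "measure M (upper_tail M D A p) = p * measure M A"
proof (cases "p = 1")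
  case True
  have "cond_quantile M D A 0 \<le> ereal y" for y
    unfolding cond_quantile_def by (rule Inf_lower) (auto simp: cond_cdf_def)
  then show ?thesis using True by (simp add: upper_tail_def)
next
  case False
  define q where "q = cond_quantile M D A (1 - p)"
  have "upper_tail M D A p = A - {x\<in>A. ereal (D x) < q}"
    by (auto simp: upper_tail_def q_def not_less)
  moreover have "{x\<in>A. ereal (D x) < q} \<in> sets M" by (rule sets_Collect_A, measurable)
  moreover have "measure M {x\<in>A. ereal (D x) < q} = (1 - p) * measure M A"
    unfolding q_def using assms False by (intro measure_below_cond_quantile(2)) auto
  ultimately show ?thesis by (simp add: finite_measure_Diff algebra_simps)
qed

lemma cond_mean_lower_tail_le:
  assumes p: "0 < p" "p \<le> 1" and B: "B \<in> sets M" "B \<subseteq> A" "measure M B = p * measure M A"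
  shows "cond_mean M D (lower_tail M D A p) \<le> cond_mean M D B"
proof -
  have "(LINT x:lower_tail M D A p|M. D x) \<le> (LINT x:B|M. D x)"
    using measure_lower_tail[OF p] B
    by (intro set_integral_lower_section_le[OF A_sets _ _ lower_tail_subset _ D_integrable,
          where t = "cond_quantile M D A p"]) (auto simp: lower_tail_def)
  then show ?thesis
    unfolding cond_mean_def using measure_lower_tail[OF p] B(3) p A_pos by (simp add: divide_right_mono)
qed

lemma cond_mean_upper_tail_ge:
  assumes p: "0 < p" "p \<le> 1" and B: "B \<in> sets M" "B \<subseteq> A" "measure M B = p * measure M A"
  shows "cond_mean M D B \<le> cond_mean M D (upper_tail M D A p)"
proof -
  have "(LINT x:B|M. D x) \<le> (LINT x:upper_tail M D A p|M. D x)"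
    using measure_upper_tail[OF p] B
    by (intro set_integral_upper_section_ge[OF A_sets _ _ upper_tail_subset _ D_integrable,
          where t = "cond_quantile M D A (1 - p)"]) (auto simp: upper_tail_def)
  then show ?thesis
    unfolding cond_mean_def using measure_upper_tail[OF p] B(3) p A_pos by (simp add: divide_right_mono)
qed

end

section \<open>The difference-in-differences model\<close>

lemma did_model_measurable:
  assumes "did_model M G Y1 S1 Y20 Y21 S20 S21"
  shows "G \<in> measurable M (count_space UNIV)" "S1 \<in> measurable M (count_space UNIV)"
    "S20 \<in> measurable M (count_space UNIV)" "S21 \<in> measurable M (count_space UNIV)"
    "Y1 \<in> borel_measurable M" "Y20 \<in> borel_measurable M" "Y21 \<in> borel_measurable M"
  using assms by (simp_all add: did_model_def)

lemma measurable_Ydd[measurable]: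
  assumes [measurable]: "G \<in> measurable M (count_space UNIV)" "Y1 \<in> borel_measurable M"
    "Y20 \<in> borel_measurable M" "Y21 \<in> borel_measurable M"
  shows "Ydd G Y1 Y20 Y21 \<in> borel_measurable M"
  unfolding Ydd_def obsY2_def by measurable

lemma sets_AO_grp[measurable]:
  assumes [measurable]: "G \<in> measurable M (count_space UNIV)"
    "S20 \<in> measurable M (count_space UNIV)" "S21 \<in> measurable M (count_space UNIV)"
  shows "AO_grp M G S20 S21 g \<in> sets M"
  unfolding AO_grp_def by measurable

lemma sets_obs_grp[measurable]:
  assumes [measurable]: "G \<in> measurable M (count_space UNIV)"
    "S20 \<in> measurable M (count_space UNIV)" "S21 \<in> measurable M (count_space UNIV)"
  shows "obs_grp M G S20 S21 g \<in> sets M"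
  unfolding obs_grp_def obsS2_def by measurable

lemma obs_grp_True: "obs_grp M G S20 S21 True = {x\<in>space M. G x \<and> S21 x}"
  by (auto simp: obs_grp_def obsS2_def)

lemma obs_grp_False: "obs_grp M G S20 S21 False = {x\<in>space M. \<not> G x \<and> S20 x}"
  by (auto simp: obs_grp_def obsS2_def)

lemma obs_grp_cong:
  "(\<And>x. x \<in> space M \<Longrightarrow> obsS2 G S20' S21' x = obsS2 G S20 S21 x)
    \<Longrightarrow> obs_grp M G S20' S21' g = obs_grp M G S20 S21 g"
  by (auto simp: obs_grp_def)

lemma AO_grp_subset_obs_grp: "AO_grp M G S20 S21 g \<subseteq> obs_grp M G S20 S21 g"
  by (auto simp: AO_grp_def obs_grp_def obsS2_def)

lemma pi1_eq: "pi1 M G S20 S21 = measure M (AO_grp M G S20 S21 True) / measure M (obs_grp M G S20 S21 True)"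
  by (simp add: pi1_def obs_grp_True)

lemma pi0_eq: "pi0 M G S20 S21 = measure M (AO_grp M G S20 S21 False) / measure M (obs_grp M G S20 S21 False)"
  by (simp add: pi0_def obs_grp_False)

lemma Delta_LB_eq_tails:
  "Delta_LB M G D (obsS2 G S20 S21) p1 p0
    = cond_mean M D (lower_tail M D (obs_grp M G S20 S21 True) p1)
    - cond_mean M D (upper_tail M D (obs_grp M G S20 S21 False) p0)"
  by (simp add: Delta_LB_def lower_tail_def upper_tail_def obs_grp_def)

lemma Delta_UB_eq_tails:
  "Delta_UB M G D (obsS2 G S20 S21) p1 p0
    = cond_mean M D (upper_tail M D (obs_grp M G S20 S21 True) p1)
    - cond_mean M D (lower_tail M D (obs_grp M G S20 S21 False) p0)"
  by (simp add: Delta_UB_def lower_tail_def upper_tail_def obs_grp_def)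

lemma ATT_AO_eq_cond_mean_diff:
  assumes model: "did_model M G Y1 S1 Y20 Y21 S20 S21"
    and int: "set_integrable M (AO_grp M G S20 S21 True) (Ydd G Y1 Y20 Y21)"
  shows "ATT_AO M G Y20 Y21 S20 S21
    = cond_mean M (Ydd G Y1 Y20 Y21) (AO_grp M G S20 S21 True)
    - cond_mean M (Ydd G Y1 Y20 Y21) (AO_grp M G S20 S21 False)"
proof -
  note [measurable] = did_model_measurable[OF model]
  from model have int_trend: "set_integrable M (AO_grp M G S20 S21 True) (\<lambda>x. Y20 x - Y1 x)"
    and ppt: "cond_mean M (\<lambda>x. Y20 x - Y1 x) (AO_grp M G S20 S21 True)
      = cond_mean M (\<lambda>x. Y20 x - Y1 x) (AO_grp M G S20 S21 False)"
    by (simp_all add: did_model_def)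
  have "ATT_AO M G Y20 Y21 S20 S21
      = cond_mean M (\<lambda>x. Ydd G Y1 Y20 Y21 x - (Y20 x - Y1 x)) (AO_grp M G S20 S21 True)"
    unfolding ATT_AO_def by (rule cond_mean_cong) (auto simp: AO_grp_def Ydd_def obsY2_def)
  also have "\<dots> = cond_mean M (Ydd G Y1 Y20 Y21) (AO_grp M G S20 S21 True)
      - cond_mean M (\<lambda>x. Y20 x - Y1 x) (AO_grp M G S20 S21 True)"
    by (rule cond_mean_diff[OF int int_trend])
  also have "cond_mean M (\<lambda>x. Y20 x - Y1 x) (AO_grp M G S20 S21 True)
      = cond_mean M (Ydd G Y1 Y20 Y21) (AO_grp M G S20 S21 False)"
    unfolding ppt by (rule cond_mean_cong) (auto simp: AO_grp_def Ydd_def obsY2_def)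
  finally show ?thesis .
qed

lemma did_model_reassign_strata:
  assumes model: "did_model M G Y1 S1 Y20 Y21 S20 S21"
    and T1: "T1 \<in> sets M" "T1 \<subseteq> obs_grp M G S20 S21 True" "0 < measure M T1"
    and T0: "T0 \<in> sets M" "T0 \<subseteq> obs_grp M G S20 S21 False"
  obtains Y20' S20' S21' where "did_model M G Y1 S1 Y20' Y21 S20' S21'"
    "\<And>x. obsY2 G Y20' Y21 x = obsY2 G Y20 Y21 x" "\<And>x. obsS2 G S20' S21' x = obsS2 G S20 S21 x"
    "AO_grp M G S20' S21' True = T1" "AO_grp M G S20' S21' False = T0"
proof -
  note [measurable] = did_model_measurable[OF model] T1(1) T0(1)
  interpret prob_space M using model by (simp add: did_model_def)
  define c where "c = cond_mean M (Ydd G Y1 Y20 Y21) T0"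
  define S20' where "S20' x = (if G x then x \<in> T1 else S20 x)" for x
  define S21' where "S21' x = (if G x then S21 x else x \<in> T0)" for x
  define Y20' where "Y20' x = (if G x then Y1 x + c else Y20 x)" for x
  have obs: "obsY2 G Y20' Y21 x = obsY2 G Y20 Y21 x" "obsS2 G S20' S21' x = obsS2 G S20 S21 x" for x
    by (simp_all add: obsY2_def obsS2_def Y20'_def S20'_def S21'_def)
  have AO1: "AO_grp M G S20' S21' True = T1" and AO0: "AO_grp M G S20' S21' False = T0"
    using T1(2) T0(2) sets.sets_into_space[OF T1(1)] sets.sets_into_space[OF T0(1)]
    by (auto simp: AO_grp_def S20'_def S21'_def obs_grp_True obs_grp_False)
  have trend_T1: "\<And>x. x \<in> T1 \<Longrightarrow> Y20' x - Y1 x = c"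
    using T1(2) by (auto simp: Y20'_def obs_grp_True)
  have trend_T0: "\<And>x. x \<in> T0 \<Longrightarrow> Y20' x - Y1 x = Ydd G Y1 Y20 Y21 x"
    using T0(2) by (auto simp: Y20'_def Ydd_def obsY2_def obs_grp_False)
  have measurable': "S20' \<in> measurable M (count_space UNIV)"
    "S21' \<in> measurable M (count_space UNIV)" "Y20' \<in> borel_measurable M"
    unfolding S20'_def S21'_def Y20'_def by (measurable, measurable, measurable)
  have "did_model M G Y1 S1 Y20' Y21 S20' S21'"
    unfolding did_model_def AO1 AO0
  proof (intro conjI)
    show "\<forall>x\<in>space M. \<not> S1 x \<longrightarrow> \<not> S20' x \<and> \<not> S21' x"
      using model T1(2) T0(2) by (auto simp: did_model_def S20'_def S21'_def obs_grp_True obs_grp_False)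
    have "set_integrable M T1 (\<lambda>x. Y20' x - Y1 x) \<longleftrightarrow> set_integrable M T1 (\<lambda>_. c)"
      by (rule set_integrable_cong) (simp_all add: trend_T1)
    then show "set_integrable M T1 (\<lambda>x. Y20' x - Y1 x)"
      using set_integrable_const[OF T1(1)] by simp
    have "cond_mean M (\<lambda>x. Y20' x - Y1 x) T1 = c"
      using cond_mean_cong[OF T1(1) trend_T1] cond_mean_const[OF T1(1,3)] by simp
    also have "c = cond_mean M (\<lambda>x. Y20' x - Y1 x) T0"
      unfolding c_def by (rule cond_mean_cong[OF T0(1) trend_T0, symmetric])
    finally show "cond_mean M (\<lambda>x. Y20' x - Y1 x) T1 = cond_mean M (\<lambda>x. Y20' x - Y1 x) T0" .
  qed (simp_all add: prob_space_axioms measurable' did_model_measurable[OF model])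
  then show thesis by (rule that[OF _ obs AO1 AO0])
qed

lemma ATT_AO_attainable:
  assumes model: "did_model M G Y1 S1 Y20 Y21 S20 S21"
    and pos: "\<And>g. 0 < measure M (obs_grp M G S20 S21 g)"
    and int: "set_integrable M (obs_grp M G S20 S21 True) (Ydd G Y1 Y20 Y21)"
    and pi1: "0 < pi1 M G S20 S21"
    and T1: "T1 \<in> sets M" "T1 \<subseteq> obs_grp M G S20 S21 True"
      "measure M T1 = pi1 M G S20 S21 * measure M (obs_grp M G S20 S21 True)"
    and T0: "T0 \<in> sets M" "T0 \<subseteq> obs_grp M G S20 S21 False"
      "measure M T0 = pi0 M G S20 S21 * measure M (obs_grp M G S20 S21 False)"
  shows "\<exists>Y20' Y21' S20' S21'. did_model M G Y1 S1 Y20' Y21' S20' S21'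
    \<and> (\<forall>x\<in>space M. obsY2 G Y20' Y21' x = obsY2 G Y20 Y21 x \<and> obsS2 G S20' S21' x = obsS2 G S20 S21 x)
    \<and> pi1 M G S20' S21' = pi1 M G S20 S21 \<and> pi0 M G S20' S21' = pi0 M G S20 S21
    \<and> ATT_AO M G Y20' Y21' S20' S21'
      = cond_mean M (Ydd G Y1 Y20 Y21) T1 - cond_mean M (Ydd G Y1 Y20 Y21) T0"
proof -
  have "0 < measure M T1" using T1(3) pi1 pos by simp
  with did_model_reassign_strata[OF model T1(1,2) _ T0(1,2)]
  obtain Y20' S20' S21' where model': "did_model M G Y1 S1 Y20' Y21 S20' S21'"
    and obsY: "\<And>x. obsY2 G Y20' Y21 x = obsY2 G Y20 Y21 x"
    and obsS: "\<And>x. obsS2 G S20' S21' x = obsS2 G S20 S21 x"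
    and AO1: "AO_grp M G S20' S21' True = T1" and AO0: "AO_grp M G S20' S21' False = T0"
    by blast
  have obs_grp': "obs_grp M G S20' S21' g = obs_grp M G S20 S21 g" for g
    by (rule obs_grp_cong) (simp add: obsS)
  have "pi1 M G S20' S21' = pi1 M G S20 S21"
    unfolding pi1_eq[of M G S20' S21'] AO1 obs_grp' using T1(3) pos[of True] by simp
  moreover have "pi0 M G S20' S21' = pi0 M G S20 S21"
    unfolding pi0_eq[of M G S20' S21'] AO0 obs_grp' using T0(3) pos[of False] by simp
  moreover have "Ydd G Y1 Y20' Y21 = Ydd G Y1 Y20 Y21"
    by (simp add: fun_eq_iff Ydd_def obsY)
  then have "ATT_AO M G Y20' Y21 S20' S21'
      = cond_mean M (Ydd G Y1 Y20 Y21) T1 - cond_mean M (Ydd G Y1 Y20 Y21) T0"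
    using ATT_AO_eq_cond_mean_diff[OF model'] set_integrable_subset[OF int T1(1,2)] by (simp add: AO1 AO0)
  ultimately show ?thesis using model' obsY obsS by blast
qed

theorem proposition1:
  fixes M :: "'a measure" and G S1 S20 S21 :: "'a \<Rightarrow> bool" and Y1 Y20 Y21 :: "'a \<Rightarrow> real"
  assumes model: "did_model M G Y1 S1 Y20 Y21 S20 S21"
    and pos: "\<And>g. 0 < measure M (obs_grp M G S20 S21 g)"
    and cont: "\<And>g y. measure M {x \<in> obs_grp M G S20 S21 g. Ydd G Y1 Y20 Y21 x = y} = 0"
    and fin: "\<And>g. set_integrable M (obs_grp M G S20 S21 g) (Ydd G Y1 Y20 Y21)"
    and pi1: "0 < pi1 M G S20 S21" "pi1 M G S20 S21 \<le> 1"
    and pi0: "0 < pi0 M G S20 S21" "pi0 M G S20 S21 \<le> 1"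
  shows "Delta_LB M G (Ydd G Y1 Y20 Y21) (obsS2 G S20 S21) (pi1 M G S20 S21) (pi0 M G S20 S21)
           \<le> ATT_AO M G Y20 Y21 S20 S21
       \<and> ATT_AO M G Y20 Y21 S20 S21
           \<le> Delta_UB M G (Ydd G Y1 Y20 Y21) (obsS2 G S20 S21) (pi1 M G S20 S21) (pi0 M G S20 S21)
       \<and> (\<exists>Y20' Y21' S20' S21'. did_model M G Y1 S1 Y20' Y21' S20' S21'
            \<and> (\<forall>x\<in>space M. obsY2 G Y20' Y21' x = obsY2 G Y20 Y21 x
                            \<and> obsS2 G S20' S21' x = obsS2 G S20 S21 x)
            \<and> pi1 M G S20' S21' = pi1 M G S20 S21 \<and> pi0 M G S20' S21' = pi0 M G S20 S21
            \<and> ATT_AO M G Y20' Y21' S20' S21'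
                = Delta_LB M G (Ydd G Y1 Y20 Y21) (obsS2 G S20 S21) (pi1 M G S20 S21) (pi0 M G S20 S21))
       \<and> (\<exists>Y20' Y21' S20' S21'. did_model M G Y1 S1 Y20' Y21' S20' S21'
            \<and> (\<forall>x\<in>space M. obsY2 G Y20' Y21' x = obsY2 G Y20 Y21 x
                            \<and> obsS2 G S20' S21' x = obsS2 G S20 S21 x)
            \<and> pi1 M G S20' S21' = pi1 M G S20 S21 \<and> pi0 M G S20' S21' = pi0 M G S20 S21
            \<and> ATT_AO M G Y20' Y21' S20' S21'
                = Delta_UB M G (Ydd G Y1 Y20 Y21) (obsS2 G S20 S21) (pi1 M G S20 S21) (pi0 M G S20 S21))"
proof -
  note [measurable] = did_model_measurable[OF model]
  interpret prob_space M using model by (simp add: did_model_def)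
  let ?D = "Ydd G Y1 Y20 Y21" and ?A = "obs_grp M G S20 S21" and ?AO = "AO_grp M G S20 S21"
  have outcome: "continuous_outcome M (?A g) ?D" for g
    by unfold_locales (simp_all add: pos cont fin did_model_measurable[OF model])
  have AO1: "?AO True \<in> sets M" "?AO True \<subseteq> ?A True" "measure M (?AO True) = pi1 M G S20 S21 * measure M (?A True)"
    using pos[of True] by (simp_all add: AO_grp_subset_obs_grp pi1_eq)
  have AO0: "?AO False \<in> sets M" "?AO False \<subseteq> ?A False" "measure M (?AO False) = pi0 M G S20 S21 * measure M (?A False)"
    using pos[of False] by (simp_all add: AO_grp_subset_obs_grp pi0_eq)
  note AO1_between_tails = continuous_outcome.cond_mean_lower_tail_le[OF outcome pi1 AO1]
    continuous_outcome.cond_mean_upper_tail_ge[OF outcome pi1 AO1]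
  note AO0_between_tails = continuous_outcome.cond_mean_lower_tail_le[OF outcome pi0 AO0]
    continuous_outcome.cond_mean_upper_tail_ge[OF outcome pi0 AO0]
  have ATT: "ATT_AO M G Y20 Y21 S20 S21 = cond_mean M ?D (?AO True) - cond_mean M ?D (?AO False)"
    using ATT_AO_eq_cond_mean_diff[OF model set_integrable_subset[OF fin AO1(1,2)]] .
  note tail_facts = continuous_outcome.sets_lower_tail[OF outcome] continuous_outcome.sets_upper_tail[OF outcome]
    lower_tail_subset upper_tail_subset continuous_outcome.measure_lower_tail[OF outcome]
    continuous_outcome.measure_upper_tail[OF outcome]
  show ?thesis
    unfolding Delta_LB_eq_tails Delta_UB_eq_tails ATT
    using AO1_between_tails AO0_between_tails
    by (intro conjI ATT_AO_attainable[OF model pos fin pi1(1)]) (simp_all add: tail_facts pi1 pi0)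
qed

end
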